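(* Let $(T_1,T_2)$ be a commuting pair of strict contractions ($\|T_1\|<1$, $\|T_2\|<1$) on a complex Banach space $\mathbb X$ such that for $i=1,2$ the function $A_{T_i}(x)=(\|x\|^2-\|T_ix\|^2)^{1/2}$ defines a norm on $\mathbb X$, and let $\mathbb X_i=(\mathbb X,A_{T_i})$. Suppose there is a unitary $S:\mathbb X_1\oplus_2\mathbb X_2\to\mathbb X_1\oplus_2\mathbb X_2$ with $$S(T_2x,x)=(x,T_1x)\quad\text{for all }x\in\mathbb X.$$ Then $(T_1,T_2)$ admits a minimal isometric dilation on the Banach space $\widetilde{\mathbb X}=\mathbb X\oplus_2\ell_2(\mathbb X_1\oplus_2\mathbb X_2)$; i.e. there are commuting linear isometries $V_1,V_2$ on $\widetilde{\mathbb X}$ with $P_{\mathbb X}V_1^{s_1}V_2^{s_2}x=T_1^{s_1}T_2^{s_2}x$ for all $x\in\mathbb X$, $s_1,s_2\in\mathbb N\cup\{0\}$, and $\widetilde{\mathbb X}=\overline{\operatorname{span}}\{V_1^{s_1}V_2^{s_2}x:x\in\mathbb X,\ s_1,s_2\in\mathbb N\cup\{0\}\}$.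
   Context: $A_T(x)=(\|x\|^2-\|Tx\|^2)^{1/2}$ for a contraction $T$; "$A_T$ defines a norm" means it is a norm on $\mathbb X$, and $(\mathbb X,A_T)$ is $\mathbb X$ with this norm. $\oplus_2$ denotes the direct $2$-sum, with norm $\|(x_1,x_2)\|=(\|x_1\|^2+\|x_2\|^2)^{1/2}$; $\ell_2(\mathbb Y)$ is the space of square-summable sequences in $\mathbb Y$ with norm $(\sum\|y_n\|^2)^{1/2}$. $\mathbb X$ is identified with $\{(x,\mathbf 0,\mathbf 0,\dots)\}\subseteq\widetilde{\mathbb X}$ and $P_{\mathbb X}(x,(x_1,x_2),\dots)=x$. A unitary is a surjective linear isometry. *)

theory Defs
  imports "HOL-Analysis.Analysis"
begin

class complex_normed_vector = real_normed_vector +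
  fixes scaleC :: "complex \<Rightarrow> 'a \<Rightarrow> 'a"
  assumes scaleC_add_right: "scaleC a (x + y) = scaleC a x + scaleC a y"
    and scaleC_add_left: "scaleC (a + b) x = scaleC a x + scaleC b x"
    and scaleC_scaleC: "scaleC a (scaleC b x) = scaleC (a * b) x"
    and scaleC_one: "scaleC 1 x = x"
    and scaleR_scaleC: "scaleR r x = scaleC (complex_of_real r) x"
    and norm_scaleC: "norm (scaleC a x) = cmod a * norm x"

definition clinear :: "('a::complex_normed_vector \<Rightarrow> 'b::complex_normed_vector) \<Rightarrow> bool" where
  "clinear f \<longleftrightarrow> (\<forall>x y. f (x + y) = f x + f y) \<and> (\<forall>c x. f (scaleC c x) = scaleC c (f x))"

definition cblinear :: "('a::complex_normed_vector \<Rightarrow> 'b::complex_normed_vector) \<Rightarrow> bool" where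
  "cblinear f \<longleftrightarrow> clinear f \<and> bounded_linear f"

definition is_norm :: "('a::complex_normed_vector \<Rightarrow> real) \<Rightarrow> bool" where
  "is_norm N \<longleftrightarrow> (\<forall>x. N x \<ge> 0) \<and> (\<forall>x. N x = 0 \<longleftrightarrow> x = 0)
     \<and> (\<forall>c x. N (scaleC c x) = cmod c * N x) \<and> (\<forall>x y. N (x + y) \<le> N x + N y)"

definition A_T :: "('a::complex_normed_vector \<Rightarrow> 'a) \<Rightarrow> 'a \<Rightarrow> real" where
  "A_T T x = sqrt ((norm x)\<^sup>2 - (norm (T x))\<^sup>2)"

definition N12 :: "('a::complex_normed_vector \<Rightarrow> 'a) \<Rightarrow> ('a \<Rightarrow> 'a) \<Rightarrow> 'a \<times> 'a \<Rightarrow> real" where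
  "N12 T1 T2 p = sqrt ((A_T T1 (fst p))\<^sup>2 + (A_T T2 (snd p))\<^sup>2)"

definition clinear2 :: "('a::complex_normed_vector \<times> 'a \<Rightarrow> 'a \<times> 'a) \<Rightarrow> bool" where
  "clinear2 S \<longleftrightarrow>
     (\<forall>u v u' v'. S (u + u', v + v') = (fst (S (u, v)) + fst (S (u', v')), snd (S (u, v)) + snd (S (u', v'))))
   \<and> (\<forall>c u v. S (scaleC c u, scaleC c v) = (scaleC c (fst (S (u, v))), scaleC c (snd (S (u, v)))))"

definition unitary12 :: "('a::complex_normed_vector \<Rightarrow> 'a) \<Rightarrow> ('a \<Rightarrow> 'a) \<Rightarrow> ('a \<times> 'a \<Rightarrow> 'a \<times> 'a) \<Rightarrow> bool" where
  "unitary12 T1 T2 S \<longleftrightarrow> clinear2 S \<and> surj S \<and> (\<forall>p. N12 T1 T2 (S p) = N12 T1 T2 p)"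

text \<open>The space X~ = X (+)_2 l_2(X_1 (+)_2 X_2), elements represented as pairs (x, f)
  with f a square-summable sequence in X_1 (+)_2 X_2.\<close>
type_synonym 'a tilde = "'a \<times> (nat \<Rightarrow> 'a \<times> 'a)"

definition tilde_space :: "('a::complex_normed_vector \<Rightarrow> 'a) \<Rightarrow> ('a \<Rightarrow> 'a) \<Rightarrow> 'a tilde set" where
  "tilde_space T1 T2 = {z. summable (\<lambda>n. (N12 T1 T2 (snd z n))\<^sup>2)}"

definition tnorm :: "('a::complex_normed_vector \<Rightarrow> 'a) \<Rightarrow> ('a \<Rightarrow> 'a) \<Rightarrow> 'a tilde \<Rightarrow> real" where
  "tnorm T1 T2 z = sqrt ((norm (fst z))\<^sup>2 + (\<Sum>n. (N12 T1 T2 (snd z n))\<^sup>2))"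

definition tadd :: "'a::complex_normed_vector tilde \<Rightarrow> 'a tilde \<Rightarrow> 'a tilde" where
  "tadd z w = (fst z + fst w, \<lambda>n. (fst (snd z n) + fst (snd w n), snd (snd z n) + snd (snd w n)))"

definition tscale :: "complex \<Rightarrow> 'a::complex_normed_vector tilde \<Rightarrow> 'a tilde" where
  "tscale c z = (scaleC c (fst z), \<lambda>n. (scaleC c (fst (snd z n)), scaleC c (snd (snd z n))))"

definition tzero :: "'a::complex_normed_vector tilde" where
  "tzero = (0, \<lambda>n. (0, 0))"

definition temb :: "'a::complex_normed_vector \<Rightarrow> 'a tilde" where
  "temb x = (x, \<lambda>n. (0, 0))"

definition PX :: "'a::complex_normed_vector tilde \<Rightarrow> 'a" where
  "PX z = fst z"

definition tlinear_isometry :: "('a::complex_normed_vector \<Rightarrow> 'a) \<Rightarrow> ('a \<Rightarrow> 'a) \<Rightarrow> ('a tilde \<Rightarrow> 'a tilde) \<Rightarrow> bool" where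
  "tlinear_isometry T1 T2 V \<longleftrightarrow>
     V ` tilde_space T1 T2 \<subseteq> tilde_space T1 T2
   \<and> (\<forall>z\<in>tilde_space T1 T2. \<forall>w\<in>tilde_space T1 T2. V (tadd z w) = tadd (V z) (V w))
   \<and> (\<forall>c. \<forall>z\<in>tilde_space T1 T2. V (tscale c z) = tscale c (V z))
   \<and> (\<forall>z\<in>tilde_space T1 T2. tnorm T1 T2 (V z) = tnorm T1 T2 z)"

inductive_set tspan :: "'a::complex_normed_vector tilde set \<Rightarrow> 'a tilde set" for G where
  zero: "tzero \<in> tspan G"
| gen: "g \<in> G \<Longrightarrow> g \<in> tspan G"
| add: "z \<in> tspan G \<Longrightarrow> w \<in> tspan G \<Longrightarrow> tadd z w \<in> tspan G"
| scale: "z \<in> tspan G \<Longrightarrow> tscale c z \<in> tspan G"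

definition tclosed_span_eq :: "('a::complex_normed_vector \<Rightarrow> 'a) \<Rightarrow> ('a \<Rightarrow> 'a) \<Rightarrow> 'a tilde set \<Rightarrow> bool" where
  "tclosed_span_eq T1 T2 G \<longleftrightarrow> tspan G \<subseteq> tilde_space T1 T2 \<and>
     (\<forall>z\<in>tilde_space T1 T2. \<forall>e>0. \<exists>w\<in>tspan G. tnorm T1 T2 (tadd z (tscale (-1) w)) < e)"

end

theory Submission
  imports Defs
begin

text \<open>Write \<open>z = (x, e)\<close> with \<open>e n = (e\<^sub>1 n, e\<^sub>2 n) \<in> \<X>\<^sub>1 \<oplus>\<^sub>2 \<X>\<^sub>2\<close>. The dilation is
  \<open>V\<^sub>1 (x, e) = (T\<^sub>1 x, S (x, e\<^sub>2 0), S (e\<^sub>1 0, e\<^sub>2 1), S (e\<^sub>1 1, e\<^sub>2 2), \<dots>)\<close> and, symmetrically with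
  \<open>R = S\<inverse>\<close> and \<open>(e\<^sub>1', e\<^sub>2') = R \<circ> e\<close>,
  \<open>V\<^sub>2 (x, e) = (T\<^sub>2 x, (e\<^sub>1' 0, x), (e\<^sub>1' 1, e\<^sub>2' 0), (e\<^sub>1' 2, e\<^sub>2' 1), \<dots>)\<close>.
  Both are isometries because \<open>\<parallel>T\<^sub>i x\<parallel>\<^sup>2 + A\<^sub>T\<^sub>i(x)\<^sup>2 = \<parallel>x\<parallel>\<^sup>2\<close> and \<open>S\<close> is unitary. The relation
  \<open>S (T\<^sub>2 x, x) = (x, T\<^sub>1 x)\<close> makes \<open>V\<^sub>1 V\<^sub>2 (x, e) = (T\<^sub>1 T\<^sub>2 x, (x, T\<^sub>1 x), e 0, e 1, \<dots>)\<close>, which by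
  \<open>T\<^sub>1 T\<^sub>2 = T\<^sub>2 T\<^sub>1\<close> is also \<open>V\<^sub>2 V\<^sub>1 (x, e)\<close>. For minimality, the span of the orbit of \<open>\<X>\<close>
  contains \<open>V\<^sub>1 (a, 0) - (T\<^sub>1 a, 0) = (0, S (a, 0), 0, \<dots>)\<close> and
  \<open>V\<^sub>1 (V\<^sub>2 (b, 0) - (T\<^sub>2 b, 0)) = (0, S (0, b), 0, \<dots>)\<close>, hence every vector supported at
  position \<open>0\<close>; the shift \<open>V\<^sub>1 V\<^sub>2\<close> moves these to any position, so all finitely supported
  vectors lie in the span, and they are dense.\<close>

lemma scaleC_minus_one [simp]: "scaleC (-1) (x::'a::complex_normed_vector) = - x"
  using scaleR_scaleC[of "-1" x] by simp

lemma norm_le_if_onorm_le_one: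
  assumes "bounded_linear T" and "onorm T \<le> 1"
  shows "norm (T x) \<le> norm x"
proof -
  have "norm (T x) \<le> onorm T * norm x" using assms(1) by (rule onorm)
  also have "\<dots> \<le> norm x" using assms by (simp add: mult_left_le_one_le onorm_pos_le)
  finally show ?thesis .
qed

lemma is_norm_eq_0_iff: "is_norm N \<Longrightarrow> N x = 0 \<longleftrightarrow> x = 0"
  and is_norm_nonneg: "is_norm N \<Longrightarrow> N x \<ge> 0"
  and is_norm_scaleC: "is_norm N \<Longrightarrow> N (scaleC c x) = cmod c * N x"
  and is_norm_triangle: "is_norm N \<Longrightarrow> N (x + y) \<le> N x + N y"
  unfolding is_norm_def by blast+

lemma A_T_squared:
  assumes "norm (T x) \<le> norm x"
  shows "(A_T T x)\<^sup>2 = (norm x)\<^sup>2 - (norm (T x))\<^sup>2"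
  using assms unfolding A_T_def by (simp add: power_mono)

lemma N12_squared: "(N12 T1 T2 p)\<^sup>2 = (A_T T1 (fst p))\<^sup>2 + (A_T T2 (snd p))\<^sup>2"
  unfolding N12_def by simp

lemma N12_nonneg: "N12 T1 T2 p \<ge> 0"
  unfolding N12_def by simp

lemma N12_eq_norm_Pair: "N12 T1 T2 p = norm (A_T T1 (fst p), A_T T2 (snd p))"
  unfolding N12_def norm_Pair by simp

lemma summable_square_if_le_add:
  fixes a b c :: "nat \<Rightarrow> real"
  assumes "\<And>n. 0 \<le> c n" and "\<And>n. c n \<le> a n + b n"
    and "summable (\<lambda>n. (a n)\<^sup>2)" and "summable (\<lambda>n. (b n)\<^sup>2)"
  shows "summable (\<lambda>n. (c n)\<^sup>2)"
proof (rule summable_comparison_test')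
  show "summable (\<lambda>n. 2 * (a n)\<^sup>2 + 2 * (b n)\<^sup>2)"
    using assms(3,4) by (intro summable_add summable_mult)
  fix n
  have "(c n)\<^sup>2 \<le> (a n + b n)\<^sup>2"
    by (intro power_mono assms(1,2))
  also have "\<dots> \<le> 2 * (a n)\<^sup>2 + 2 * (b n)\<^sup>2"
    using sum_squares_ge_zero[of "a n - b n" 0] by (simp add: power2_eq_square algebra_simps)
  finally show "norm ((c n)\<^sup>2) \<le> 2 * (a n)\<^sup>2 + 2 * (b n)\<^sup>2" by simp
qed

lemma sums_case_nat:
  fixes f :: "nat \<Rightarrow> 'a::real_normed_vector"
  assumes "summable f"
  shows "(\<lambda>n. case_nat c f n) sums (c + suminf f)"
  using summable_sums[OF assms] sums_Suc_iff[of "case_nat c f"] by (simp add: add.commute)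

lemma tadd_eq_plus: "tadd z w = (fst z + fst w, \<lambda>n. snd z n + snd w n)"
  unfolding tadd_def by (simp add: plus_prod_def)

lemma tadd_tscale_minus_one: "tadd z (tscale (-1) w) = (fst z - fst w, \<lambda>n. snd z n - snd w n)"
  unfolding tadd_def tscale_def by (simp add: minus_prod_def)

definition ttrunc :: "nat \<Rightarrow> 'a::complex_normed_vector tilde \<Rightarrow> 'a tilde" where
  "ttrunc N z = (fst z, \<lambda>n. if n < N then snd z n else 0)"

definition tdelta :: "nat \<Rightarrow> 'a::complex_normed_vector \<times> 'a \<Rightarrow> 'a tilde" where
  "tdelta k p = (0, \<lambda>n. if n = k then p else 0)"

lemma ttrunc_Suc: "ttrunc (Suc N) z = tadd (ttrunc N z) (tdelta N (snd z N))"
  unfolding ttrunc_def tdelta_def tadd_eq_plus by auto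

lemma tspan_closed_under_map:
  assumes "\<And>z w. f (tadd z w) = tadd (f z) (f w)" and "\<And>c z. f (tscale c z) = tscale c (f z)"
    and "f tzero = tzero" and "f ` G \<subseteq> tspan G" and "z \<in> tspan G"
  shows "f z \<in> tspan G"
  using assms(5) by induction (use assms(1-4) in \<open>auto intro: tspan.intros\<close>)

locale defect_norm_pair =
  fixes T1 T2 :: "'a::complex_normed_vector \<Rightarrow> 'a"
  assumes norm1: "is_norm (A_T T1)" and norm2: "is_norm (A_T T2)"
begin

lemma N12_eq_0_iff: "N12 T1 T2 p = 0 \<longleftrightarrow> p = 0"
  unfolding N12_def using is_norm_eq_0_iff[OF norm1] is_norm_eq_0_iff[OF norm2]
  by (simp add: prod_eq_iff)

lemma N12_zero [simp]: "N12 T1 T2 0 = 0"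
  by (simp add: N12_eq_0_iff)

lemma N12_scaleC: "N12 T1 T2 (scaleC c a, scaleC c b) = cmod c * N12 T1 T2 (a, b)"
  using is_norm_scaleC[OF norm1] is_norm_scaleC[OF norm2] unfolding N12_def
  by (simp add: power_mult_distrib real_sqrt_mult flip: distrib_left)

lemma N12_triangle: "N12 T1 T2 (p + q) \<le> N12 T1 T2 p + N12 T1 T2 q"
proof -
  let ?a = "\<lambda>p. A_T T1 (fst p)" and ?b = "\<lambda>p. A_T T2 (snd p)"
  have "(?a (p + q))\<^sup>2 \<le> (?a p + ?a q)\<^sup>2"
    using is_norm_triangle[OF norm1] is_norm_nonneg[OF norm1] by (simp add: power_mono)
  moreover have "(?b (p + q))\<^sup>2 \<le> (?b p + ?b q)\<^sup>2"
    using is_norm_triangle[OF norm2] is_norm_nonneg[OF norm2] by (simp add: power_mono)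
  ultimately have "N12 T1 T2 (p + q) \<le> norm (?a p + ?a q, ?b p + ?b q)"
    unfolding N12_def norm_Pair by simp
  also have "\<dots> \<le> N12 T1 T2 p + N12 T1 T2 q"
    unfolding N12_eq_norm_Pair using norm_triangle_ineq[of "(?a p, ?b p)" "(?a q, ?b q)"] by simp
  finally show ?thesis .
qed

lemma tilde_space_tadd:
  assumes "z \<in> tilde_space T1 T2" and "w \<in> tilde_space T1 T2"
  shows "tadd z w \<in> tilde_space T1 T2"
  using assms unfolding tilde_space_def tadd_eq_plus
  by (auto intro: summable_square_if_le_add N12_nonneg N12_triangle)

lemma tilde_space_tscale:
  assumes "z \<in> tilde_space T1 T2"
  shows "tscale c z \<in> tilde_space T1 T2"
  using assms unfolding tilde_space_def tscale_def
  by (simp add: N12_scaleC power_mult_distrib summable_mult)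

lemma tilde_space_tzero: "tzero \<in> tilde_space T1 T2"
  unfolding tilde_space_def tzero_def by (simp flip: zero_prod_def)

lemma tilde_space_temb: "temb x \<in> tilde_space T1 T2"
  unfolding tilde_space_def temb_def by (simp flip: zero_prod_def)

lemma tspan_subset_tilde_space:
  assumes "G \<subseteq> tilde_space T1 T2"
  shows "tspan G \<subseteq> tilde_space T1 T2"
proof
  show "z \<in> tilde_space T1 T2" if "z \<in> tspan G" for z
    using that assms
    by induction (auto intro: tilde_space_tzero tilde_space_tadd tilde_space_tscale)
qed

lemma summable_N12_components:
  assumes "summable (\<lambda>n. (N12 T1 T2 (e n))\<^sup>2)"
  shows "summable (\<lambda>n. (A_T T1 (fst (e n)))\<^sup>2)" and "summable (\<lambda>n. (A_T T2 (snd (e n)))\<^sup>2)"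
    and "(\<Sum>n. (N12 T1 T2 (e n))\<^sup>2) = (\<Sum>n. (A_T T1 (fst (e n)))\<^sup>2) + (\<Sum>n. (A_T T2 (snd (e n)))\<^sup>2)"
proof -
  show a: "summable (\<lambda>n. (A_T T1 (fst (e n)))\<^sup>2)" and b: "summable (\<lambda>n. (A_T T2 (snd (e n)))\<^sup>2)"
    by (rule summable_comparison_test'[OF assms], simp add: N12_squared)+
  show "(\<Sum>n. (N12 T1 T2 (e n))\<^sup>2) = (\<Sum>n. (A_T T1 (fst (e n)))\<^sup>2) + (\<Sum>n. (A_T T2 (snd (e n)))\<^sup>2)"
    using suminf_add[OF a b] by (simp add: N12_squared)
qed

lemma tnorm_sub_ttrunc:
  assumes "z \<in> tilde_space T1 T2"
  shows "tnorm T1 T2 (tadd z (tscale (-1) (ttrunc N z))) = sqrt (\<Sum>i. (N12 T1 T2 (snd z (i + N)))\<^sup>2)"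
proof -
  let ?f = "\<lambda>n. (N12 T1 T2 (snd z n))\<^sup>2"
  have "summable ?f"
    using assms unfolding tilde_space_def by simp
  then have tail: "(\<lambda>i. ?f (i + N)) sums (\<Sum>i. ?f (i + N))"
    by (intro summable_sums summable_ignore_initial_segment)
  have "(\<lambda>n. if n < N then 0 else ?f n) sums (\<Sum>i. ?f (i + N))"
    using sums_zero_iff_shift[of N "\<lambda>n. if n < N then 0 else ?f n"] tail by simp
  then show ?thesis
    unfolding tadd_tscale_minus_one tnorm_def ttrunc_def
    by (simp add: if_distrib[of "\<lambda>p. snd z _ - p"] if_distrib[of "\<lambda>p. (N12 T1 T2 p)\<^sup>2"] sums_iff
        cong: if_cong)
qed

lemma ttrunc_approx:
  assumes "z \<in> tilde_space T1 T2" and "e > 0"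
  obtains N where "tnorm T1 T2 (tadd z (tscale (-1) (ttrunc N z))) < e"
proof -
  have "summable (\<lambda>n. (N12 T1 T2 (snd z n))\<^sup>2)"
    using assms(1) unfolding tilde_space_def by simp
  then have "\<exists>N. \<forall>n\<ge>N. norm (\<Sum>i. (N12 T1 T2 (snd z (i + n)))\<^sup>2) < e\<^sup>2"
    using assms(2) by (intro suminf_exist_split) simp_all
  then obtain N where "norm (\<Sum>i. (N12 T1 T2 (snd z (i + N)))\<^sup>2) < e\<^sup>2"
    by blast
  then have "sqrt (\<Sum>i. (N12 T1 T2 (snd z (i + N)))\<^sup>2) < sqrt (e\<^sup>2)"
    by (intro real_sqrt_less_mono) simp
  then have "sqrt (\<Sum>i. (N12 T1 T2 (snd z (i + N)))\<^sup>2) < e"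
    using assms(2) by simp
  with that show ?thesis
    using tnorm_sub_ttrunc[OF assms(1)] by metis
qed

end

locale unitary_coupling = defect_norm_pair +
  fixes S :: "'a::complex_normed_vector \<times> 'a \<Rightarrow> 'a \<times> 'a"
  assumes unitary: "unitary12 T1 T2 S"
begin

lemma S_add: "S (p + q) = S p + S q"
  using unitary unfolding unitary12_def clinear2_def plus_prod_def by (simp add: case_prod_beta)

lemma S_scaleC: "S (scaleC c a, scaleC c b) = (scaleC c (fst (S (a, b))), scaleC c (snd (S (a, b))))"
  using unitary unfolding unitary12_def clinear2_def by blast

lemma N12_S [simp]: "N12 T1 T2 (S p) = N12 T1 T2 p"
  using unitary unfolding unitary12_def by blast

lemma S_zero [simp]: "S 0 = 0"
  using S_add[of 0 0] by simp

lemma S_diff: "S (p - q) = S p - S q"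
  using S_add[of "p - q" q] by (simp add: eq_diff_eq)

lemma inj_S: "inj S"
proof (rule injI)
  fix p q
  assume "S p = S q"
  then have "N12 T1 T2 (p - q) = 0"
    by (metis N12_S N12_zero S_diff diff_self)
  then show "p = q"
    by (simp add: N12_eq_0_iff)
qed

lemma S_inv_S [simp]: "S (inv S p) = p"
  using unitary unfolding unitary12_def by (simp add: surj_f_inv_f)

lemma inv_S_S [simp]: "inv S (S p) = p"
  using inj_S by simp

lemma inv_S_zero [simp]: "inv S 0 = 0"
  by (metis S_zero inv_S_S)

lemma inv_S_add: "inv S (p + q) = inv S p + inv S q"
  by (metis S_add S_inv_S inv_S_S)

lemma inv_S_scaleC:
  "inv S (scaleC c a, scaleC c b) = (scaleC c (fst (inv S (a, b))), scaleC c (snd (inv S (a, b))))"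
  by (metis S_scaleC S_inv_S inv_S_S prod.collapse)

lemma N12_inv_S [simp]: "N12 T1 T2 (inv S p) = N12 T1 T2 p"
  by (metis N12_S S_inv_S)

end

locale dilation_setup = unitary_coupling +
  assumes clinear_T1: "clinear T1" and clinear_T2: "clinear T2"
    and contraction_T1: "\<And>x. norm (T1 x) \<le> norm x"
    and contraction_T2: "\<And>x. norm (T2 x) \<le> norm x"
    and T1_T2_commute: "\<And>x. T1 (T2 x) = T2 (T1 x)"
    and S_graph: "\<And>x. S (T2 x, x) = (x, T1 x)"
begin

lemma T1_add: "T1 (x + y) = T1 x + T1 y" and T1_scaleC: "T1 (scaleC c x) = scaleC c (T1 x)"
  and T2_add: "T2 (x + y) = T2 x + T2 y" and T2_scaleC: "T2 (scaleC c x) = scaleC c (T2 x)"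
  using clinear_T1 clinear_T2 unfolding clinear_def by blast+

lemma T1_zero [simp]: "T1 0 = 0" and T2_zero [simp]: "T2 0 = 0"
  using T1_add[of 0 0] T2_add[of 0 0] by simp_all

definition V1 :: "'a tilde \<Rightarrow> 'a tilde" where
  "V1 z = (T1 (fst z), \<lambda>n. S (case_nat (fst z) (\<lambda>k. fst (snd z k)) n, snd (snd z n)))"

definition V2 :: "'a tilde \<Rightarrow> 'a tilde" where
  "V2 z = (T2 (fst z), \<lambda>n. (fst (inv S (snd z n)), case_nat (fst z) (\<lambda>k. snd (inv S (snd z k))) n))"

lemma V1_tadd: "V1 (tadd z w) = tadd (V1 z) (V1 w)"
  unfolding V1_def tadd_eq_plus by (auto simp: T1_add S_add[symmetric] split: nat.split)

lemma V2_tadd: "V2 (tadd z w) = tadd (V2 z) (V2 w)"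
  unfolding V2_def tadd_eq_plus by (auto simp: T2_add inv_S_add split: nat.split)

lemma V1_tscale: "V1 (tscale c z) = tscale c (V1 z)"
  unfolding V1_def tscale_def by (auto simp: T1_scaleC S_scaleC[symmetric] split: nat.split)

lemma V2_tscale: "V2 (tscale c z) = tscale c (V2 z)"
  unfolding V2_def tscale_def by (auto simp: T2_scaleC inv_S_scaleC split: nat.split)

lemma V1_tzero: "V1 tzero = tzero" and V2_tzero: "V2 tzero = tzero"
  unfolding V1_def V2_def tzero_def by (auto simp flip: zero_prod_def split: nat.split)

lemma V1_V2: "V1 (V2 z) = (T1 (T2 (fst z)), case_nat (fst z, T1 (fst z)) (snd z))"
  unfolding V1_def V2_def by (auto simp: S_graph split: nat.split)

lemma V2_V1: "V2 (V1 z) = (T1 (T2 (fst z)), case_nat (fst z, T1 (fst z)) (snd z))"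
  unfolding V1_def V2_def by (auto simp: T1_T2_commute split: nat.split)

lemma V1_norm:
  assumes "z \<in> tilde_space T1 T2"
  shows "V1 z \<in> tilde_space T1 T2" and "tnorm T1 T2 (V1 z) = tnorm T1 T2 z"
proof -
  obtain x e where z: "z = (x, e)" by fastforce
  let ?a = "\<lambda>n. (A_T T1 (fst (e n)))\<^sup>2" and ?b = "\<lambda>n. (A_T T2 (snd (e n)))\<^sup>2"
  have e: "summable (\<lambda>n. (N12 T1 T2 (e n))\<^sup>2)"
    using assms unfolding z tilde_space_def by simp
  have "(\<lambda>n. (N12 T1 T2 (snd (V1 z) n))\<^sup>2) = (\<lambda>n. case_nat ((A_T T1 x)\<^sup>2) ?a n + ?b n)"
    by (auto simp: V1_def z N12_squared split: nat.split)
  also have "\<dots> sums ((A_T T1 x)\<^sup>2 + suminf ?a + suminf ?b)"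
    using summable_N12_components[OF e] by (intro sums_add sums_case_nat summable_sums)
  finally have V1_sums: "(\<lambda>n. (N12 T1 T2 (snd (V1 z) n))\<^sup>2) sums ((A_T T1 x)\<^sup>2 + (\<Sum>n. (N12 T1 T2 (e n))\<^sup>2))"
    using summable_N12_components[OF e] by (simp add: add.assoc)
  then show "V1 z \<in> tilde_space T1 T2"
    unfolding tilde_space_def by (blast intro: sums_summable)
  show "tnorm T1 T2 (V1 z) = tnorm T1 T2 z"
    using sums_unique[OF V1_sums] unfolding tnorm_def
    by (simp add: V1_def z A_T_squared[OF contraction_T1])
qed

lemma V2_norm:
  assumes "z \<in> tilde_space T1 T2"
  shows "V2 z \<in> tilde_space T1 T2" and "tnorm T1 T2 (V2 z) = tnorm T1 T2 z"
proof -
  obtain x e where z: "z = (x, e)" by fastforce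
  let ?a = "\<lambda>n. (A_T T1 (fst (inv S (e n))))\<^sup>2" and ?b = "\<lambda>n. (A_T T2 (snd (inv S (e n))))\<^sup>2"
  have e: "summable (\<lambda>n. (N12 T1 T2 (inv S (e n)))\<^sup>2)"
    using assms unfolding z tilde_space_def by simp
  have "(\<lambda>n. (N12 T1 T2 (snd (V2 z) n))\<^sup>2) = (\<lambda>n. case_nat ((A_T T2 x)\<^sup>2) ?b n + ?a n)"
    by (auto simp: V2_def z N12_squared split: nat.split)
  also have "\<dots> sums ((A_T T2 x)\<^sup>2 + suminf ?b + suminf ?a)"
    using summable_N12_components[OF e] by (intro sums_add sums_case_nat summable_sums)
  finally have V2_sums: "(\<lambda>n. (N12 T1 T2 (snd (V2 z) n))\<^sup>2) sums ((A_T T2 x)\<^sup>2 + (\<Sum>n. (N12 T1 T2 (e n))\<^sup>2))"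
    using summable_N12_components[OF e] by (simp add: ac_simps)
  then show "V2 z \<in> tilde_space T1 T2"
    unfolding tilde_space_def by (blast intro: sums_summable)
  show "tnorm T1 T2 (V2 z) = tnorm T1 T2 z"
    using sums_unique[OF V2_sums] unfolding tnorm_def
    by (simp add: V2_def z A_T_squared[OF contraction_T2])
qed

lemma V1_isometry: "tlinear_isometry T1 T2 V1"
  unfolding tlinear_isometry_def using V1_norm V1_tadd V1_tscale by blast

lemma V2_isometry: "tlinear_isometry T1 T2 V2"
  unfolding tlinear_isometry_def using V2_norm V2_tadd V2_tscale by blast

lemma V1_V2_commute: "V1 (V2 z) = V2 (V1 z)"
  by (simp add: V1_V2 V2_V1)

lemma fst_V_powers: "fst ((V1 ^^ s1) ((V2 ^^ s2) z)) = (T1 ^^ s1) ((T2 ^^ s2) (fst z))"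
proof -
  have "fst ((V2 ^^ s2) z) = (T2 ^^ s2) (fst z)"
    by (induction s2) (simp_all add: V2_def)
  then show ?thesis
    by (induction s1) (simp_all add: V1_def)
qed

lemma V_powers_tilde_space:
  assumes "z \<in> tilde_space T1 T2"
  shows "(V1 ^^ s1) ((V2 ^^ s2) z) \<in> tilde_space T1 T2"
proof -
  have "(V2 ^^ s2) z \<in> tilde_space T1 T2"
    by (induction s2) (simp_all add: assms V2_norm)
  then show ?thesis
    by (induction s1) (simp_all add: V1_norm)
qed

definition orbit :: "'a tilde set" where
  "orbit = {(V1 ^^ s1) ((V2 ^^ s2) (temb x)) | x s1 s2. True}"

lemma temb_in_tspan_orbit: "temb x \<in> tspan orbit"
proof (rule tspan.gen)
  have "temb x = (V1 ^^ 0) ((V2 ^^ 0) (temb x))"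
    by simp
  then show "temb x \<in> orbit"
    unfolding orbit_def by blast
qed

lemma V1_image_orbit: "V1 ` orbit \<subseteq> orbit"
proof
  fix z
  assume "z \<in> V1 ` orbit"
  then obtain x s1 s2 where "z = V1 ((V1 ^^ s1) ((V2 ^^ s2) (temb x)))"
    unfolding orbit_def by blast
  then have "z = (V1 ^^ Suc s1) ((V2 ^^ s2) (temb x))"
    by simp
  then show "z \<in> orbit"
    unfolding orbit_def by blast
qed

lemma V2_image_orbit: "V2 ` orbit \<subseteq> orbit"
proof
  fix z
  assume "z \<in> V2 ` orbit"
  then obtain x s1 s2 where z: "z = V2 ((V1 ^^ s1) ((V2 ^^ s2) (temb x)))"
    unfolding orbit_def by blast
  have "V2 ((V1 ^^ n) w) = (V1 ^^ n) (V2 w)" for n w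
    by (induction n) (simp_all add: V1_V2_commute[symmetric])
  then have "z = (V1 ^^ s1) ((V2 ^^ Suc s2) (temb x))"
    unfolding z by simp
  then show "z \<in> orbit"
    unfolding orbit_def by blast
qed

lemma V1_tspan_orbit: "z \<in> tspan orbit \<Longrightarrow> V1 z \<in> tspan orbit"
  using V1_image_orbit by (intro tspan_closed_under_map[OF V1_tadd V1_tscale V1_tzero]) (auto intro: tspan.gen)

lemma V2_tspan_orbit: "z \<in> tspan orbit \<Longrightarrow> V2 z \<in> tspan orbit"
  using V2_image_orbit by (intro tspan_closed_under_map[OF V2_tadd V2_tscale V2_tzero]) (auto intro: tspan.gen)

lemma tdelta_add: "tdelta k (p + q) = tadd (tdelta k p) (tdelta k q)"
  unfolding tdelta_def tadd_eq_plus by auto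

lemma V1_V2_tdelta: "V1 (V2 (tdelta k p)) = tdelta (Suc k) p"
  unfolding V1_V2 tdelta_def by (auto simp: fun_eq_iff simp flip: zero_prod_def split: nat.split)

lemma tdelta_zero_S_left: "tadd (V1 (temb a)) (tscale (-1) (temb (T1 a))) = tdelta 0 (S (a, 0))"
  unfolding tadd_tscale_minus_one V1_def temb_def tdelta_def
  by (auto simp flip: zero_prod_def split: nat.split)

lemma tdelta_zero_S_right: "V1 (tadd (V2 (temb b)) (tscale (-1) (temb (T2 b)))) = tdelta 0 (S (0, b))"
  unfolding tadd_tscale_minus_one V1_def V2_def temb_def tdelta_def
  by (auto simp flip: zero_prod_def split: nat.split)

lemma tdelta_zero_in_tspan_orbit: "tdelta 0 p \<in> tspan orbit"
proof -
  have "tdelta 0 (S (a, 0)) \<in> tspan orbit" for a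
    unfolding tdelta_zero_S_left[symmetric]
    by (intro tspan.add tspan.scale V1_tspan_orbit temb_in_tspan_orbit)
  moreover have "tdelta 0 (S (0, b)) \<in> tspan orbit" for b
    unfolding tdelta_zero_S_right[symmetric]
    by (intro tspan.add tspan.scale V1_tspan_orbit V2_tspan_orbit temb_in_tspan_orbit)
  moreover have "p = S (fst (inv S p), 0) + S (0, snd (inv S p))"
    by (simp flip: S_add)
  ultimately show ?thesis
    by (metis tdelta_add tspan.add)
qed

lemma tdelta_in_tspan_orbit: "tdelta k p \<in> tspan orbit"
  by (induction k) (auto simp flip: V1_V2_tdelta
      intro: tdelta_zero_in_tspan_orbit V1_tspan_orbit V2_tspan_orbit)

lemma ttrunc_in_tspan_orbit: "ttrunc N z \<in> tspan orbit"
proof (induction N)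
  case 0
  have "ttrunc 0 z = temb (fst z)"
    unfolding ttrunc_def temb_def by (simp flip: zero_prod_def)
  then show ?case
    by (simp add: temb_in_tspan_orbit)
next
  case (Suc N)
  then show ?case
    unfolding ttrunc_Suc by (intro tspan.add tdelta_in_tspan_orbit)
qed

lemma tclosed_span_eq_orbit: "tclosed_span_eq T1 T2 orbit"
  unfolding tclosed_span_eq_def
proof (intro conjI ballI allI impI)
  show "tspan orbit \<subseteq> tilde_space T1 T2"
    by (rule tspan_subset_tilde_space)
      (use V_powers_tilde_space[OF tilde_space_temb] in \<open>auto simp: orbit_def\<close>)
  show "\<exists>w\<in>tspan orbit. tnorm T1 T2 (tadd z (tscale (-1) w)) < e"
    if "z \<in> tilde_space T1 T2" and "e > 0" for z e
    using ttrunc_approx[OF that] ttrunc_in_tspan_orbit by blast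
qed

end

theorem theorem2p3:
  fixes T1 T2 :: "'a::{complex_normed_vector, banach} \<Rightarrow> 'a"
    and S :: "'a \<times> 'a \<Rightarrow> 'a \<times> 'a"
  assumes "cblinear T1" and "cblinear T2"
    and "onorm T1 < 1" and "onorm T2 < 1"
    and "T1 \<circ> T2 = T2 \<circ> T1"
    and "is_norm (A_T T1)" and "is_norm (A_T T2)"
    and "unitary12 T1 T2 S"
    and "\<forall>x. S (T2 x, x) = (x, T1 x)"
  shows "\<exists>V1 V2. tlinear_isometry T1 T2 V1 \<and> tlinear_isometry T1 T2 V2
     \<and> (\<forall>z\<in>tilde_space T1 T2. V1 (V2 z) = V2 (V1 z))
     \<and> (\<forall>x s1 s2. PX ((V1 ^^ s1) ((V2 ^^ s2) (temb x))) = (T1 ^^ s1) ((T2 ^^ s2) x))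
     \<and> tclosed_span_eq T1 T2 {(V1 ^^ s1) ((V2 ^^ s2) (temb x)) | x s1 s2. True}"
proof -
  interpret dilation_setup T1 T2 S
  proof
    show "norm (T1 x) \<le> norm x" and "norm (T2 x) \<le> norm x" for x
      using assms(1-4) unfolding cblinear_def by (auto intro: norm_le_if_onorm_le_one)
    show "T1 (T2 x) = T2 (T1 x)" for x
      using assms(5) by (metis comp_apply)
  qed (use assms in \<open>auto simp: cblinear_def\<close>)
  have "PX ((V1 ^^ s1) ((V2 ^^ s2) (temb x))) = (T1 ^^ s1) ((T2 ^^ s2) x)" for x s1 s2
    by (simp add: PX_def temb_def fst_V_powers)
  then show ?thesis
    using V1_isometry V2_isometry V1_V2_commute tclosed_span_eq_orbit unfolding orbit_def by blast
qed

end
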